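(* Given an instance of the Squared Metric Facility Location Problem, let $\alpha$ be the vector of final budgets produced by Algorithm $A1$. Then for every facility $i$ and cities $j$ and $j'$, $\sqrt{\alpha_j} \le \sqrt{\alpha_{j'}} +\sqrt{c_{ij'}} + \sqrt{c_{ij}}$.
   Context: Facility Location instance: finite disjoint sets $C$ (cities), $F$ (facilities), non-negative $c_{ij}$, $f_i$. Squared metric: $\sqrt{c_{ij}}\le \sqrt{c_{ij'}}+\sqrt{c_{i'j'}}+\sqrt{c_{i'j}}$ for all $i,i'\in F$, $j,j'\in C$. Algorithm $A1$: initially all facilities are unopened and all cities unconnected ($U:=C$); each city $j$ has a budget $\alpha_j=0$; an unconnected city $j$ offers $\max(\alpha_j-c_{ij},0)$ to each unopened facility $i$. While $U\ne\emptyset$, the budgets of all unconnected cities increase continuously at the same rate (connected cities' budgets stay fixed) until: (a) for some unconnected $j$ and open $i$, $\alpha_j=c_{ij}$: connect $j$ to $i$ and remove $j$ from $U$; or (b) for some unopened $i$, $\sum_{j\in U}\max(\alpha_j-c_{ij},0)=f_i$: open $i$ and connect to $i$ every unconnected $j$ with $\alpha_j\ge c_{ij}$, removing them from $U$. *)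

theory Defs
  imports Main Complex_Main
begin

text \<open>Model of Algorithm A1 as a discrete-event process.
  A state is (t, U, Op, alpha): current time t (= the common budget of all
  unconnected cities), the set U of unconnected cities, the set Op of opened
  facilities, and the budgets alpha of the already connected cities
  (frozen at the moment of connection).  Each step advances time to the
  earliest moment t' >= t at which an event of type (a) or (b) occurs and
  processes one such event (simultaneous events are processed one after the
  other, in any order).\<close>

type_synonym ('c, 'f) a1_state = "real \<times> 'c set \<times> 'f set \<times> ('c \<Rightarrow> real)"

definition offer :: "('f \<Rightarrow> 'c \<Rightarrow> real) \<Rightarrow> 'c set \<Rightarrow> 'f \<Rightarrow> real \<Rightarrow> real" where
  "offer c U i s = (\<Sum>j\<in>U. max (s - c i j) 0)"

definition a1_event :: "'f set \<Rightarrow> ('f \<Rightarrow> 'c \<Rightarrow> real) \<Rightarrow> ('f \<Rightarrow> real)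
    \<Rightarrow> 'c set \<Rightarrow> 'f set \<Rightarrow> real \<Rightarrow> bool" where
  "a1_event F c f U Op s \<longleftrightarrow>
     (\<exists>j\<in>U. \<exists>i\<in>Op. s = c i j) \<or> (\<exists>i\<in>F - Op. offer c U i s = f i)"

inductive a1_step :: "'f set \<Rightarrow> ('f \<Rightarrow> 'c \<Rightarrow> real) \<Rightarrow> ('f \<Rightarrow> real)
    \<Rightarrow> ('c, 'f) a1_state \<Rightarrow> ('c, 'f) a1_state \<Rightarrow> bool"
  for F c f where
  connect: "\<lbrakk> U \<noteq> {}; t \<le> t'; \<forall>s. t \<le> s \<and> s < t' \<longrightarrow> \<not> a1_event F c f U Op s;
             j \<in> U; i \<in> Op; t' = c i j \<rbrakk>
            \<Longrightarrow> a1_step F c f (t, U, Op, \<alpha>) (t', U - {j}, Op, \<alpha>(j := t'))"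
| open_fac: "\<lbrakk> U \<noteq> {}; t \<le> t'; \<forall>s. t \<le> s \<and> s < t' \<longrightarrow> \<not> a1_event F c f U Op s;
             i \<in> F; i \<notin> Op; offer c U i t' = f i \<rbrakk>
            \<Longrightarrow> a1_step F c f (t, U, Op, \<alpha>)
                 (t', U - {j\<in>U. c i j \<le> t'}, insert i Op,
                  (\<lambda>j. if j \<in> U \<and> c i j \<le> t' then t' else \<alpha> j))"

definition a1_output :: "'c set \<Rightarrow> 'f set \<Rightarrow> ('f \<Rightarrow> 'c \<Rightarrow> real) \<Rightarrow> ('f \<Rightarrow> real)
    \<Rightarrow> ('c \<Rightarrow> real) \<Rightarrow> bool" where
  "a1_output C F c f \<alpha> \<longleftrightarrow>
     (\<exists>t Op. (a1_step F c f)\<^sup>*\<^sup>* (0, C, {}, (\<lambda>_. 0)) (t, {}, Op, \<alpha>))"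

definition squared_metric :: "'c set \<Rightarrow> 'f set \<Rightarrow> ('f \<Rightarrow> 'c \<Rightarrow> real) \<Rightarrow> bool" where
  "squared_metric C F c \<longleftrightarrow>
     (\<forall>i\<in>F. \<forall>i'\<in>F. \<forall>j\<in>C. \<forall>j'\<in>C.
        sqrt (c i j) \<le> sqrt (c i j') + sqrt (c i' j') + sqrt (c i' j))"

end

theory Submission
  imports Defs
begin

text \<open>Each connected city j' has a witness: an open facility i' with c i' j' \<le> \<alpha> j' and
  \<alpha> j \<le> max (\<alpha> j') (c i' j) for every connected city j. Cities connected before j' have
  budgets at most \<alpha> j'. Cities connected later were still unconnected while i' was open,
  so they were connected no later than time c i' j. With \<alpha> j' \<ge> c i' j' and the squared
  triangle inequality through i and i', this gives the bound.\<close>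

definition budget_witness ::
    "'c set \<Rightarrow> ('f \<Rightarrow> 'c \<Rightarrow> real) \<Rightarrow> ('c \<Rightarrow> real) \<Rightarrow> 'f \<Rightarrow> 'c \<Rightarrow> bool" where
  "budget_witness D c \<alpha> i' j' \<longleftrightarrow> c i' j' \<le> \<alpha> j' \<and> (\<forall>j\<in>D. \<alpha> j \<le> max (\<alpha> j') (c i' j))"

definition a1_invariant :: "'c set \<Rightarrow> 'f set \<Rightarrow> ('f \<Rightarrow> 'c \<Rightarrow> real) \<Rightarrow> ('c, 'f) a1_state \<Rightarrow> bool" where
  "a1_invariant C F c st = (case st of (t, U, Op, \<alpha>) \<Rightarrow>
     U \<subseteq> C \<and> Op \<subseteq> F \<and> (\<forall>j\<in>U. \<forall>i\<in>Op. t \<le> c i j) \<and> (\<forall>j\<in>C - U. \<alpha> j \<le> t) \<and>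
     (\<forall>j'\<in>C - U. \<exists>i'\<in>Op. budget_witness (C - U) c \<alpha> i' j'))"

lemma no_event_before_connection_cost:
  assumes "\<forall>s. t \<le> s \<and> s < t' \<longrightarrow> \<not> a1_event F c f U Op s"
    and "j \<in> U" and "i \<in> Op" and "t \<le> c i j"
  shows "t' \<le> c i j"
proof (rule ccontr)
  assume "\<not> t' \<le> c i j"
  moreover have "a1_event F c f U Op (c i j)"
    using assms(2,3) unfolding a1_event_def by blast
  ultimately show False using assms(1,4) by force
qed

text \<open>Both events of A1 are instances: connecting the set N of unconnected cities at time t',
  after possibly opening facilities (Op').\<close>

lemma a1_invariant_connect_set:
  assumes inv: "a1_invariant C F c (t, U, Op, \<alpha>)"
    and "t \<le> t'" and "N \<subseteq> U" and "Op \<subseteq> Op'" and "Op' \<subseteq> F"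
    and old_open: "\<forall>j\<in>U. \<forall>i\<in>Op. t' \<le> c i j"
    and still_unconnected: "\<forall>j\<in>U - N. \<forall>i\<in>Op'. t' \<le> c i j"
    and reached: "\<forall>j\<in>N. \<exists>i\<in>Op'. c i j \<le> t'"
  shows "a1_invariant C F c (t', U - N, Op', \<lambda>j. if j \<in> N then t' else \<alpha> j)"
    (is "a1_invariant C F c (t', U - N, Op', ?\<alpha>')")
proof -
  have UC: "U \<subseteq> C" and old_le: "\<forall>j\<in>C - U. \<alpha> j \<le> t"
    and old_wit: "\<forall>j'\<in>C - U. \<exists>i'\<in>Op. budget_witness (C - U) c \<alpha> i' j'"
    using inv unfolding a1_invariant_def by auto
  have le_t': "?\<alpha>' j \<le> t'" if "j \<in> C - (U - N)" for j
    using that old_le \<open>t \<le> t'\<close> by force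
  have "\<exists>i'\<in>Op'. budget_witness (C - (U - N)) c ?\<alpha>' i' j'" if j': "j' \<in> C - (U - N)" for j'
  proof (cases "j' \<in> N")
    case True
    then obtain i' where "i' \<in> Op'" "c i' j' \<le> t'" using reached by blast
    then show ?thesis using True le_t' unfolding budget_witness_def by force
  next
    case False
    with j' have "j' \<in> C - U" by blast
    with old_wit obtain i' where i': "i' \<in> Op" "budget_witness (C - U) c \<alpha> i' j'" by blast
    have "?\<alpha>' j \<le> max (?\<alpha>' j') (c i' j)" if "j \<in> C - (U - N)" for j
      using that i' False old_open \<open>N \<subseteq> U\<close> unfolding budget_witness_def by force
    moreover have "c i' j' \<le> ?\<alpha>' j'" using i' False unfolding budget_witness_def by simp
    ultimately show ?thesis
      using i'(1) \<open>Op \<subseteq> Op'\<close> unfolding budget_witness_def by blast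
  qed
  then show ?thesis
    using UC \<open>Op' \<subseteq> F\<close> still_unconnected le_t' unfolding a1_invariant_def by auto
qed

lemma a1_step_preserves_invariant:
  assumes "a1_step F c f st st'" and "a1_invariant C F c st"
  shows "a1_invariant C F c st'"
  using assms
proof (induction rule: a1_step.induct)
  case (connect U t t' Op j i \<alpha>)
  have inv: "a1_invariant C F c (t, U, Op, \<alpha>)" by fact
  then have "Op \<subseteq> F" "\<forall>j\<in>U. \<forall>i\<in>Op. t \<le> c i j" unfolding a1_invariant_def by auto
  then have old_open: "\<forall>j\<in>U. \<forall>i\<in>Op. t' \<le> c i j"
    using no_event_before_connection_cost[OF connect.hyps(3)] by blast
  have "{j} \<subseteq> U" using \<open>j \<in> U\<close> by simp
  moreover have "\<forall>k\<in>U - {j}. \<forall>i\<in>Op. t' \<le> c i k" using old_open by blast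
  moreover have "\<forall>k\<in>{j}. \<exists>i'\<in>Op. c i' k \<le> t'" using connect.hyps(5,6) by auto
  ultimately have "a1_invariant C F c (t', U - {j}, Op, \<lambda>k. if k \<in> {j} then t' else \<alpha> k)"
    by (rule a1_invariant_connect_set[OF inv \<open>t \<le> t'\<close> _ order_refl \<open>Op \<subseteq> F\<close> old_open])
  moreover have "\<alpha>(j := t') = (\<lambda>k. if k \<in> {j} then t' else \<alpha> k)" by auto
  ultimately show ?case by (simp only:)
next
  case (open_fac U t t' Op i \<alpha>)
  let ?N = "{j\<in>U. c i j \<le> t'}"
  have inv: "a1_invariant C F c (t, U, Op, \<alpha>)" by fact
  then have "Op \<subseteq> F" "\<forall>j\<in>U. \<forall>i\<in>Op. t \<le> c i j" unfolding a1_invariant_def by auto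
  then have old_open: "\<forall>j\<in>U. \<forall>i\<in>Op. t' \<le> c i j"
    using no_event_before_connection_cost[OF open_fac.hyps(3)] by blast
  have "?N \<subseteq> U" by blast
  moreover have "Op \<subseteq> insert i Op" by blast
  moreover have "insert i Op \<subseteq> F" using \<open>Op \<subseteq> F\<close> \<open>i \<in> F\<close> by blast
  moreover have "\<forall>j\<in>U - ?N. \<forall>i'\<in>insert i Op. t' \<le> c i' j" using old_open by auto
  moreover have "\<forall>j\<in>?N. \<exists>i'\<in>insert i Op. c i' j \<le> t'" by blast
  ultimately have "a1_invariant C F c (t', U - ?N, insert i Op, \<lambda>j. if j \<in> ?N then t' else \<alpha> j)"
    by (rule a1_invariant_connect_set[OF inv \<open>t \<le> t'\<close> _ _ _ old_open])
  moreover have "(\<lambda>j. if j \<in> U \<and> c i j \<le> t' then t' else \<alpha> j)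
      = (\<lambda>j. if j \<in> ?N then t' else \<alpha> j)" by auto
  ultimately show ?case by (simp only:)
qed

lemma a1_reachable_invariant:
  assumes "(a1_step F c f)\<^sup>*\<^sup>* st st'" and "a1_invariant C F c st"
  shows "a1_invariant C F c st'"
  using assms by (induction rule: rtranclp_induct) (auto intro: a1_step_preserves_invariant)

lemma sqrt_le_by_witness:
  fixes a a' b b' x y :: real
  assumes "b' \<le> a'" and "a \<le> max a' b" and "sqrt b \<le> sqrt b' + x + y"
    and "0 \<le> x" and "0 \<le> y"
  shows "sqrt a \<le> sqrt a' + x + y"
proof -
  have "sqrt a \<le> max (sqrt a') (sqrt b)"
    using assms(2) by (auto simp: max_def split: if_splits)
  moreover have "sqrt b' \<le> sqrt a'" using assms(1) by simp
  ultimately show ?thesis using assms(3-5) by linarith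
qed

theorem lemma1:
  fixes C :: "'c set" and F :: "'f set"
    and c :: "'f \<Rightarrow> 'c \<Rightarrow> real" and f :: "'f \<Rightarrow> real" and \<alpha> :: "'c \<Rightarrow> real"
  assumes "finite C" and "finite F"
    and "\<forall>i\<in>F. \<forall>j\<in>C. c i j \<ge> 0"
    and "\<forall>i\<in>F. f i \<ge> 0"
    and "squared_metric C F c"
    and "a1_output C F c f \<alpha>"
    and "i \<in> F" and "j \<in> C" and "j' \<in> C"
  shows "sqrt (\<alpha> j) \<le> sqrt (\<alpha> j') + sqrt (c i j') + sqrt (c i j)"
proof -
  obtain t Op where run: "(a1_step F c f)\<^sup>*\<^sup>* (0, C, {}, \<lambda>_. 0) (t, {}, Op, \<alpha>)"
    using assms(6) unfolding a1_output_def by blast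
  have "a1_invariant C F c (0, C, {}, \<lambda>_. 0)" unfolding a1_invariant_def by auto
  then have "a1_invariant C F c (t, {}, Op, \<alpha>)" using a1_reachable_invariant[OF run] by blast
  then have "Op \<subseteq> F" and "\<forall>j'\<in>C. \<exists>i'\<in>Op. budget_witness C c \<alpha> i' j'"
    unfolding a1_invariant_def by auto
  then obtain i' where "i' \<in> F" and wit: "budget_witness C c \<alpha> i' j'"
    using \<open>j' \<in> C\<close> by blast
  have "c i' j' \<le> \<alpha> j'" "\<alpha> j \<le> max (\<alpha> j') (c i' j)"
    using wit \<open>j \<in> C\<close> unfolding budget_witness_def by auto
  moreover have "sqrt (c i' j) \<le> sqrt (c i' j') + sqrt (c i j') + sqrt (c i j)"
    using assms(5,7-9) \<open>i' \<in> F\<close> unfolding squared_metric_def by blast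
  moreover have "0 \<le> sqrt (c i j')" "0 \<le> sqrt (c i j)" using assms(3,7-9) by auto
  ultimately show ?thesis by (rule sqrt_le_by_witness)
qed

end
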